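(* Let $(L,\exists)$ be a quantum monadic algebra and $a\in L$ with $\exists a=a$. Then the interval $[0,a]=\{x\in L: x\le a\}$, with the lattice operations of $L$, bounds $0,a$, orthocomplement $x^\#=a\wedge x^\perp$, and the restriction of $\exists$, is a quantum monadic algebra. Moreover, with $C(a)=\{x\in L: a\text{ commutes with }x\}$ (a subalgebra of $(L,\exists)$), the map $x\mapsto(x\wedge a,\,x\wedge a^\perp)$ is an isomorphism of quantum monadic algebras from $(C(a),\exists)$ onto the product $([0,a],\exists)\times([0,a^\perp],\exists)$, where $[0,a^\perp]$ carries orthocomplement $x\mapsto a^\perp\wedge x^\perp$.
   Context: An orthomodular lattice (OML) is a bounded lattice with a unary operation $\perp$ that is order-inverting, of period two, satisfies $x\wedge x^\perp=0$, $x\vee x^\perp=1$, and $x\le y\Rightarrow x\vee(x^\perp\wedge y)=y$. A quantum monadic algebra $(L,\exists)$ is an OML with a unary operation $\exists$ satisfying (Q1) $\exists 0=0$; (Q2) $p\le\exists p$; (Q3) $\exists(p\vee q)=\exists p\vee\exists q$; (Q4) $\exists\exists p=\exists p$; (Q5) $\exists(\exists p)^\perp=(\exists p)^\perp$. Elements $x,y$ of an OML commute if $x=(x\wedge y)\vee(x\wedge y^\perp)$. *)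

theory Defs
  imports Main
begin

record 'a qstr =
  car  :: "'a set"
  meet :: "'a \<Rightarrow> 'a \<Rightarrow> 'a"
  join :: "'a \<Rightarrow> 'a \<Rightarrow> 'a"
  orth :: "'a \<Rightarrow> 'a"
  zero :: 'a
  one  :: 'a
  ex   :: "'a \<Rightarrow> 'a"

definition leq :: "('a, 'b) qstr_scheme \<Rightarrow> 'a \<Rightarrow> 'a \<Rightarrow> bool" where
  "leq M x y \<longleftrightarrow> meet M x y = x"

definition is_OML :: "('a, 'b) qstr_scheme \<Rightarrow> bool" where
  "is_OML M \<longleftrightarrow>
     zero M \<in> car M \<and> one M \<in> car M \<and>
     (\<forall>x\<in>car M. \<forall>y\<in>car M. meet M x y \<in> car M \<and> join M x y \<in> car M) \<and>
     (\<forall>x\<in>car M. orth M x \<in> car M) \<and>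
     (\<forall>x\<in>car M. \<forall>y\<in>car M. meet M x y = meet M y x \<and> join M x y = join M y x) \<and>
     (\<forall>x\<in>car M. \<forall>y\<in>car M. \<forall>z\<in>car M.
        meet M (meet M x y) z = meet M x (meet M y z) \<and>
        join M (join M x y) z = join M x (join M y z)) \<and>
     (\<forall>x\<in>car M. \<forall>y\<in>car M. meet M x (join M x y) = x \<and> join M x (meet M x y) = x) \<and>
     (\<forall>x\<in>car M. leq M (zero M) x \<and> leq M x (one M)) \<and>
     (\<forall>x\<in>car M. \<forall>y\<in>car M. leq M x y \<longrightarrow> leq M (orth M y) (orth M x)) \<and>
     (\<forall>x\<in>car M. orth M (orth M x) = x) \<and>
     (\<forall>x\<in>car M. meet M x (orth M x) = zero M \<and> join M x (orth M x) = one M) \<and>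
     (\<forall>x\<in>car M. \<forall>y\<in>car M. leq M x y \<longrightarrow> join M x (meet M (orth M x) y) = y)"

definition is_QMA :: "('a, 'b) qstr_scheme \<Rightarrow> bool" where
  "is_QMA M \<longleftrightarrow> is_OML M \<and>
     (\<forall>p\<in>car M. ex M p \<in> car M) \<and>
     ex M (zero M) = zero M \<and>
     (\<forall>p\<in>car M. leq M p (ex M p)) \<and>
     (\<forall>p\<in>car M. \<forall>q\<in>car M. ex M (join M p q) = join M (ex M p) (ex M q)) \<and>
     (\<forall>p\<in>car M. ex M (ex M p) = ex M p) \<and>
     (\<forall>p\<in>car M. ex M (orth M (ex M p)) = orth M (ex M p))"

definition commutes :: "('a, 'b) qstr_scheme \<Rightarrow> 'a \<Rightarrow> 'a \<Rightarrow> bool" where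
  "commutes M x y \<longleftrightarrow> x = join M (meet M x y) (meet M x (orth M y))"

definition interval :: "'a qstr \<Rightarrow> 'a \<Rightarrow> 'a qstr" where
  "interval M b = \<lparr> car = {x\<in>car M. leq M x b}, meet = meet M, join = join M,
     orth = (\<lambda>x. meet M b (orth M x)), zero = zero M, one = b, ex = ex M \<rparr>"

definition centralizer :: "'a qstr \<Rightarrow> 'a \<Rightarrow> 'a set" where
  "centralizer M a = {x\<in>car M. commutes M a x}"

definition is_subalgebra :: "'a qstr \<Rightarrow> 'a set \<Rightarrow> bool" where
  "is_subalgebra M C \<longleftrightarrow> C \<subseteq> car M \<and> zero M \<in> C \<and> one M \<in> C \<and>
     (\<forall>x\<in>C. \<forall>y\<in>C. meet M x y \<in> C \<and> join M x y \<in> C) \<and>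
     (\<forall>x\<in>C. orth M x \<in> C) \<and> (\<forall>x\<in>C. ex M x \<in> C)"

definition substr :: "'a qstr \<Rightarrow> 'a set \<Rightarrow> 'a qstr" where
  "substr M C = M\<lparr>car := C\<rparr>"

definition qprod :: "'a qstr \<Rightarrow> 'b qstr \<Rightarrow> ('a \<times> 'b) qstr" where
  "qprod M N = \<lparr> car = car M \<times> car N,
     meet = (\<lambda>(x1,x2) (y1,y2). (meet M x1 y1, meet N x2 y2)),
     join = (\<lambda>(x1,x2) (y1,y2). (join M x1 y1, join N x2 y2)),
     orth = (\<lambda>(x1,x2). (orth M x1, orth N x2)),
     zero = (zero M, zero N), one = (one M, one N),
     ex = (\<lambda>(x1,x2). (ex M x1, ex N x2)) \<rparr>"

definition qma_iso :: "'a qstr \<Rightarrow> 'b qstr \<Rightarrow> ('a \<Rightarrow> 'b) \<Rightarrow> bool" where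
  "qma_iso M N f \<longleftrightarrow> bij_betw f (car M) (car N) \<and>
     (\<forall>x\<in>car M. \<forall>y\<in>car M. f (meet M x y) = meet N (f x) (f y) \<and>
                          f (join M x y) = join N (f x) (f y)) \<and>
     (\<forall>x\<in>car M. f (orth M x) = orth N (f x)) \<and>
     (\<forall>x\<in>car M. f (ex M x) = ex N (f x)) \<and>
     f (zero M) = zero N \<and> f (one M) = one N"

end

theory Submission
  imports Defs
begin

text \<open>
  Commutation is symmetric in an orthomodular lattice, so \<open>a\<close> commutes with \<open>x\<close> exactly when
  \<open>x = u \<squnion> v\<close> with \<open>u \<le> a\<close> and \<open>v \<le> a\<^sup>\<perp>\<close>; the orthomodular law then forces \<open>u = x \<sqinter> a\<close>
  and \<open>v = x \<sqinter> a\<^sup>\<perp>\<close>. So \<open>x \<mapsto> (x \<sqinter> a, x \<sqinter> a\<^sup>\<perp>)\<close> is a bijection from \<open>C(a)\<close> onto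
  \<open>[0,a] \<times> [0,a\<^sup>\<perp>]\<close> with inverse \<open>(u, v) \<mapsto> u \<squnion> v\<close>, and every operation is transported by
  splitting its arguments: joins split componentwise, \<open>(u \<squnion> v)\<^sup>\<perp> \<sqinter> a = a \<sqinter> u\<^sup>\<perp>\<close>, and
  \<open>\<exists>(u \<squnion> v) = \<exists>u \<squnion> \<exists>v\<close> where monotonicity of \<open>\<exists>\<close> keeps \<open>\<exists>u \<le> \<exists>a = a\<close> and
  \<open>\<exists>v \<le> a\<^sup>\<perp>\<close> (closed by (Q5)). On an interval \<open>[0,b]\<close>, \<open>x \<mapsto> b \<sqinter> x\<^sup>\<perp>\<close> is an
  orthocomplement by the orthomodular law, and since \<open>\<exists>\<close>-closed elements are closed under
  \<open>\<perp>\<close> and \<open>\<sqinter>\<close>, \<open>\<exists>\<close> restricts to \<open>[0,b]\<close> when \<open>\<exists>b = b\<close>.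
\<close>

locale oml =
  fixes M :: "'a qstr"
  assumes OML: "is_OML M"
begin

abbreviation L where "L \<equiv> car M"
abbreviation meet_M (infixl "\<sqinter>" 70) where "x \<sqinter> y \<equiv> meet M x y"
abbreviation join_M (infixl "\<squnion>" 65) where "x \<squnion> y \<equiv> join M x y"
abbreviation orth_M ("_\<^sup>\<perp>" [1000] 1000) where "x\<^sup>\<perp> \<equiv> orth M x"
abbreviation zero_M ("\<zero>") where "\<zero> \<equiv> zero M"
abbreviation one_M ("\<one>") where "\<one> \<equiv> one M"
abbreviation leq_M (infix "\<sqsubseteq>" 50) where "x \<sqsubseteq> y \<equiv> leq M x y"

lemma
  zero_closed [simp]: "\<zero> \<in> L" and
  one_closed [simp]: "\<one> \<in> L" and
  meet_closed [simp]: "x \<in> L \<Longrightarrow> y \<in> L \<Longrightarrow> x \<sqinter> y \<in> L" and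
  join_closed [simp]: "x \<in> L \<Longrightarrow> y \<in> L \<Longrightarrow> x \<squnion> y \<in> L" and
  orth_closed [simp]: "x \<in> L \<Longrightarrow> x\<^sup>\<perp> \<in> L" and
  meet_comm: "x \<in> L \<Longrightarrow> y \<in> L \<Longrightarrow> x \<sqinter> y = y \<sqinter> x" and
  join_comm: "x \<in> L \<Longrightarrow> y \<in> L \<Longrightarrow> x \<squnion> y = y \<squnion> x" and
  meet_assoc: "x \<in> L \<Longrightarrow> y \<in> L \<Longrightarrow> w \<in> L \<Longrightarrow> x \<sqinter> y \<sqinter> w = x \<sqinter> (y \<sqinter> w)" and
  join_assoc: "x \<in> L \<Longrightarrow> y \<in> L \<Longrightarrow> w \<in> L \<Longrightarrow> x \<squnion> y \<squnion> w = x \<squnion> (y \<squnion> w)" and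
  meet_absorb: "x \<in> L \<Longrightarrow> y \<in> L \<Longrightarrow> x \<sqinter> (x \<squnion> y) = x" and
  join_absorb: "x \<in> L \<Longrightarrow> y \<in> L \<Longrightarrow> x \<squnion> x \<sqinter> y = x" and
  zero_least: "x \<in> L \<Longrightarrow> \<zero> \<sqsubseteq> x" and
  one_greatest: "x \<in> L \<Longrightarrow> x \<sqsubseteq> \<one>" and
  orth_antimono: "x \<in> L \<Longrightarrow> y \<in> L \<Longrightarrow> x \<sqsubseteq> y \<Longrightarrow> y\<^sup>\<perp> \<sqsubseteq> x\<^sup>\<perp>" and
  orth_orth [simp]: "x \<in> L \<Longrightarrow> x\<^sup>\<perp>\<^sup>\<perp> = x" and
  meet_orth_self: "x \<in> L \<Longrightarrow> x \<sqinter> x\<^sup>\<perp> = \<zero>" and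
  join_orth_self: "x \<in> L \<Longrightarrow> x \<squnion> x\<^sup>\<perp> = \<one>" and
  orthomodular: "x \<in> L \<Longrightarrow> y \<in> L \<Longrightarrow> x \<sqsubseteq> y \<Longrightarrow> x \<squnion> x\<^sup>\<perp> \<sqinter> y = y"
  using OML unfolding is_OML_def by auto

lemma leq_iff_meet: "x \<sqsubseteq> y \<longleftrightarrow> x \<sqinter> y = x"
  by (simp add: leq_def)

lemma meet_idem: "x \<in> L \<Longrightarrow> x \<sqinter> x = x"
  by (metis join_absorb join_closed meet_absorb)

lemma join_idem: "x \<in> L \<Longrightarrow> x \<squnion> x = x"
  by (metis join_absorb meet_absorb meet_closed)

lemma leq_iff_join: "x \<in> L \<Longrightarrow> y \<in> L \<Longrightarrow> x \<sqsubseteq> y \<longleftrightarrow> x \<squnion> y = y"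
  by (metis join_absorb join_comm leq_iff_meet meet_absorb meet_comm)

lemma leq_refl: "x \<in> L \<Longrightarrow> x \<sqsubseteq> x"
  by (simp add: leq_iff_meet meet_idem)

lemma leq_trans: "x \<in> L \<Longrightarrow> y \<in> L \<Longrightarrow> w \<in> L \<Longrightarrow> x \<sqsubseteq> y \<Longrightarrow> y \<sqsubseteq> w \<Longrightarrow> x \<sqsubseteq> w"
  by (metis leq_iff_meet meet_assoc)

lemma leq_antisym: "x \<in> L \<Longrightarrow> y \<in> L \<Longrightarrow> x \<sqsubseteq> y \<Longrightarrow> y \<sqsubseteq> x \<Longrightarrow> x = y"
  by (metis leq_iff_meet meet_comm)

lemma meet_leq1: "x \<in> L \<Longrightarrow> y \<in> L \<Longrightarrow> x \<sqinter> y \<sqsubseteq> x"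
  by (metis leq_iff_meet meet_assoc meet_comm meet_idem)

lemma meet_leq2: "x \<in> L \<Longrightarrow> y \<in> L \<Longrightarrow> x \<sqinter> y \<sqsubseteq> y"
  by (metis meet_comm meet_leq1)

lemma meet_greatest: "x \<in> L \<Longrightarrow> y \<in> L \<Longrightarrow> w \<in> L \<Longrightarrow> w \<sqsubseteq> x \<Longrightarrow> w \<sqsubseteq> y \<Longrightarrow> w \<sqsubseteq> x \<sqinter> y"
  by (metis leq_iff_meet meet_assoc)

lemma join_leq1: "x \<in> L \<Longrightarrow> y \<in> L \<Longrightarrow> x \<sqsubseteq> x \<squnion> y"
  by (simp add: leq_iff_meet meet_absorb)

lemma join_leq2: "x \<in> L \<Longrightarrow> y \<in> L \<Longrightarrow> y \<sqsubseteq> x \<squnion> y"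
  by (metis join_comm join_leq1)

lemma join_least: "x \<in> L \<Longrightarrow> y \<in> L \<Longrightarrow> w \<in> L \<Longrightarrow> x \<sqsubseteq> w \<Longrightarrow> y \<sqsubseteq> w \<Longrightarrow> x \<squnion> y \<sqsubseteq> w"
  by (metis join_assoc join_closed leq_iff_join)

lemma meet_eq_left: "x \<sqsubseteq> y \<Longrightarrow> x \<sqinter> y = x"
  by (simp add: leq_iff_meet)

lemma meet_eq_right: "x \<in> L \<Longrightarrow> y \<in> L \<Longrightarrow> x \<sqsubseteq> y \<Longrightarrow> y \<sqinter> x = x"
  by (simp add: leq_iff_meet meet_comm)

lemma join_join_swap:
  assumes "p \<in> L" "q \<in> L" "r \<in> L" "s \<in> L"
  shows "(p \<squnion> q) \<squnion> (r \<squnion> s) = (p \<squnion> r) \<squnion> (q \<squnion> s)"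
proof -
  have "(p \<squnion> q) \<squnion> (r \<squnion> s) = p \<squnion> ((q \<squnion> r) \<squnion> s)"
    using assms by (simp add: join_assoc)
  also have "\<dots> = p \<squnion> ((r \<squnion> q) \<squnion> s)"
    using assms by (simp add: join_comm)
  finally show ?thesis
    using assms by (simp add: join_assoc)
qed

lemma meet_meet_distrib:
  assumes x: "x \<in> L" and y: "y \<in> L" and a: "a \<in> L"
  shows "x \<sqinter> y \<sqinter> a = (x \<sqinter> a) \<sqinter> (y \<sqinter> a)"
proof -
  have "(x \<sqinter> a) \<sqinter> (y \<sqinter> a) = x \<sqinter> ((a \<sqinter> a) \<sqinter> y)"
    using x y a by (simp add: meet_assoc meet_comm[of y a])
  also have "\<dots> = x \<sqinter> (y \<sqinter> a)"
    using x y a by (simp add: meet_idem meet_comm)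
  finally show ?thesis
    using x y a by (simp add: meet_assoc)
qed

lemma orth_join:
  assumes x: "x \<in> L" and y: "y \<in> L"
  shows "(x \<squnion> y)\<^sup>\<perp> = x\<^sup>\<perp> \<sqinter> y\<^sup>\<perp>"
proof (rule leq_antisym)
  show "(x \<squnion> y)\<^sup>\<perp> \<sqsubseteq> x\<^sup>\<perp> \<sqinter> y\<^sup>\<perp>"
    using x y by (simp add: meet_greatest orth_antimono join_leq1 join_leq2)
  have "x \<sqsubseteq> (x\<^sup>\<perp> \<sqinter> y\<^sup>\<perp>)\<^sup>\<perp>" "y \<sqsubseteq> (x\<^sup>\<perp> \<sqinter> y\<^sup>\<perp>)\<^sup>\<perp>"
    using x y orth_antimono[OF _ _ meet_leq1, of "x\<^sup>\<perp>" "y\<^sup>\<perp>"]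
      orth_antimono[OF _ _ meet_leq2, of "x\<^sup>\<perp>" "y\<^sup>\<perp>"] by simp_all
  then have "x \<squnion> y \<sqsubseteq> (x\<^sup>\<perp> \<sqinter> y\<^sup>\<perp>)\<^sup>\<perp>"
    using x y by (simp add: join_least)
  then show "x\<^sup>\<perp> \<sqinter> y\<^sup>\<perp> \<sqsubseteq> (x \<squnion> y)\<^sup>\<perp>"
    using x y orth_antimono[of "x \<squnion> y" "(x\<^sup>\<perp> \<sqinter> y\<^sup>\<perp>)\<^sup>\<perp>"] by simp
qed (use x y in simp_all)

lemma orth_meet:
  assumes x: "x \<in> L" and y: "y \<in> L"
  shows "(x \<sqinter> y)\<^sup>\<perp> = x\<^sup>\<perp> \<squnion> y\<^sup>\<perp>"
proof -
  have "(x\<^sup>\<perp> \<squnion> y\<^sup>\<perp>)\<^sup>\<perp> = x \<sqinter> y"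
    using x y by (simp add: orth_join)
  then have "(x\<^sup>\<perp> \<squnion> y\<^sup>\<perp>)\<^sup>\<perp>\<^sup>\<perp> = (x \<sqinter> y)\<^sup>\<perp>"
    by simp
  then show ?thesis
    using x y by simp
qed

lemma orthomodular_dual:
  assumes u: "u \<in> L" and b: "b \<in> L" and "u \<sqsubseteq> b"
  shows "b \<sqinter> (b\<^sup>\<perp> \<squnion> u) = u"
proof -
  have "b\<^sup>\<perp> \<squnion> b \<sqinter> u\<^sup>\<perp> = u\<^sup>\<perp>"
    using orthomodular[of "b\<^sup>\<perp>" "u\<^sup>\<perp>"] orth_antimono[OF u b \<open>u \<sqsubseteq> b\<close>] u b by simp
  then have "(b\<^sup>\<perp> \<squnion> b \<sqinter> u\<^sup>\<perp>)\<^sup>\<perp> = u"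
    using u by simp
  then show ?thesis
    using u b by (simp add: orth_join orth_meet)
qed

lemma commutes_iff: "commutes M x y \<longleftrightarrow> x = x \<sqinter> y \<squnion> x \<sqinter> y\<^sup>\<perp>"
  by (simp add: commutes_def)

lemma commutes_imp_meet_orth_join:
  assumes x: "x \<in> L" and y: "y \<in> L" and "commutes M x y"
  shows "y \<sqinter> (y\<^sup>\<perp> \<squnion> x) = x \<sqinter> y"
proof -
  have "x = x \<sqinter> y \<squnion> x \<sqinter> y\<^sup>\<perp>"
    using \<open>commutes M x y\<close> by (simp add: commutes_iff)
  also have "\<dots> = x \<sqinter> y\<^sup>\<perp> \<squnion> x \<sqinter> y"
    using x y by (simp add: join_comm)
  finally have "y\<^sup>\<perp> \<squnion> x = (y\<^sup>\<perp> \<squnion> x \<sqinter> y\<^sup>\<perp>) \<squnion> x \<sqinter> y"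
    using x y by (simp add: join_assoc)
  also have "y\<^sup>\<perp> \<squnion> x \<sqinter> y\<^sup>\<perp> = y\<^sup>\<perp>"
    using x y meet_leq2[of x "y\<^sup>\<perp>"] by (simp add: leq_iff_join join_comm)
  finally show ?thesis
    using x y by (simp add: orthomodular_dual meet_leq2)
qed

lemma meet_orth_join_imp_commutes:
  assumes x: "x \<in> L" and y: "y \<in> L" and eq: "y \<sqinter> (y\<^sup>\<perp> \<squnion> x) = y \<sqinter> x"
  shows "commutes M y x"
proof -
  define w where "w = y \<sqinter> (y\<^sup>\<perp> \<squnion> x)"
  have w: "w \<in> L" "w \<sqsubseteq> y"
    using x y by (simp_all add: w_def meet_leq1)
  have "w\<^sup>\<perp> \<sqinter> y = y \<sqinter> (y\<^sup>\<perp> \<squnion> y \<sqinter> x\<^sup>\<perp>)"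
    using x y by (simp add: w_def orth_meet orth_join meet_comm)
  also have "\<dots> = y \<sqinter> x\<^sup>\<perp>"
    using x y by (simp add: orthomodular_dual meet_leq1)
  finally have "y = w \<squnion> y \<sqinter> x\<^sup>\<perp>"
    using orthomodular[OF w(1) y w(2)] by simp
  then show ?thesis
    using eq by (simp add: commutes_iff w_def)
qed

lemma commutes_sym: "x \<in> L \<Longrightarrow> y \<in> L \<Longrightarrow> commutes M x y \<Longrightarrow> commutes M y x"
  by (simp add: commutes_imp_meet_orth_join meet_orth_join_imp_commutes meet_comm)

context
  fixes a u v
  assumes a: "a \<in> L" and u: "u \<in> L" "u \<sqsubseteq> a" and v: "v \<in> L" "v \<sqsubseteq> a\<^sup>\<perp>"
begin

lemma orth_leq_orthogonal: "a \<sqsubseteq> v\<^sup>\<perp>"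
  using orth_antimono[OF v(1) orth_closed[OF a] v(2)] a by simp

lemma join_orthogonal_meet: "(u \<squnion> v) \<sqinter> a = u"
proof (rule leq_antisym)
  have "(u \<squnion> v) \<sqinter> a \<sqsubseteq> (u \<squnion> v) \<sqinter> v\<^sup>\<perp>"
    using leq_trans[OF _ a _ meet_leq2 orth_leq_orthogonal] a u v
    by (simp add: meet_greatest meet_leq1)
  also have "(u \<squnion> v) \<sqinter> v\<^sup>\<perp> = v\<^sup>\<perp> \<sqinter> (v\<^sup>\<perp>\<^sup>\<perp> \<squnion> u)"
    using u v by (simp add: meet_comm join_comm)
  also have "\<dots> = u"
    using orthomodular_dual[OF u(1) _ leq_trans[OF u(1) a _ u(2) orth_leq_orthogonal]] u v
    by simp
  finally show "(u \<squnion> v) \<sqinter> a \<sqsubseteq> u" .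
  show "u \<sqsubseteq> (u \<squnion> v) \<sqinter> a"
    using a u v by (simp add: meet_greatest join_leq1)
qed (use a u v in simp_all)

lemma orth_join_orthogonal_meet: "(u \<squnion> v)\<^sup>\<perp> \<sqinter> a = a \<sqinter> u\<^sup>\<perp>"
proof -
  have "(u \<squnion> v)\<^sup>\<perp> \<sqinter> a = u\<^sup>\<perp> \<sqinter> (v\<^sup>\<perp> \<sqinter> a)"
    using a u v by (simp add: orth_join meet_assoc)
  also have "v\<^sup>\<perp> \<sqinter> a = a"
    using meet_eq_right[OF a _ orth_leq_orthogonal] v by simp
  finally show ?thesis
    using a u by (simp add: meet_comm)
qed

end

lemma join_orthogonal_meet_orth:
  "a \<in> L \<Longrightarrow> u \<in> L \<Longrightarrow> u \<sqsubseteq> a \<Longrightarrow> v \<in> L \<Longrightarrow> v \<sqsubseteq> a\<^sup>\<perp> \<Longrightarrow> (u \<squnion> v) \<sqinter> a\<^sup>\<perp> = v"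
  using join_orthogonal_meet[of "a\<^sup>\<perp>" v u] by (simp add: join_comm)

lemma orth_join_orthogonal_meet_orth:
  "a \<in> L \<Longrightarrow> u \<in> L \<Longrightarrow> u \<sqsubseteq> a \<Longrightarrow> v \<in> L \<Longrightarrow> v \<sqsubseteq> a\<^sup>\<perp> \<Longrightarrow>
    (u \<squnion> v)\<^sup>\<perp> \<sqinter> a\<^sup>\<perp> = a\<^sup>\<perp> \<sqinter> v\<^sup>\<perp>"
  using orth_join_orthogonal_meet[of "a\<^sup>\<perp>" v u] by (simp add: join_comm)

lemma commutes_join_orthogonal:
  assumes "a \<in> L" "u \<in> L" "u \<sqsubseteq> a" "v \<in> L" "v \<sqsubseteq> a\<^sup>\<perp>"
  shows "commutes M a (u \<squnion> v)"
proof (rule commutes_sym)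
  show "commutes M (u \<squnion> v) a"
    using assms by (simp add: commutes_iff join_orthogonal_meet join_orthogonal_meet_orth)
qed (use assms in simp_all)

lemma commutes_iff_decomposition:
  assumes a: "a \<in> L" and x: "x \<in> L"
  shows "commutes M a x \<longleftrightarrow> x = x \<sqinter> a \<squnion> x \<sqinter> a\<^sup>\<perp>"
proof
  show "commutes M a x \<Longrightarrow> x = x \<sqinter> a \<squnion> x \<sqinter> a\<^sup>\<perp>"
    using commutes_sym[OF a x] by (simp add: commutes_iff)
  show "x = x \<sqinter> a \<squnion> x \<sqinter> a\<^sup>\<perp> \<Longrightarrow> commutes M a x"
    using commutes_join_orthogonal[OF a, of "x \<sqinter> a" "x \<sqinter> a\<^sup>\<perp>"] a x by (simp add: meet_leq2)
qed

context
  fixes b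
  assumes b: "b \<in> L"
begin

lemma interval_orth_orth: "x \<in> L \<Longrightarrow> x \<sqsubseteq> b \<Longrightarrow> b \<sqinter> (b \<sqinter> x\<^sup>\<perp>)\<^sup>\<perp> = x"
  using b by (simp add: orth_meet orthomodular_dual)

lemma interval_orth_antimono:
  assumes x: "x \<in> L" and y: "y \<in> L" and "x \<sqsubseteq> y"
  shows "b \<sqinter> y\<^sup>\<perp> \<sqsubseteq> b \<sqinter> x\<^sup>\<perp>"
  using leq_trans[OF _ _ _ meet_leq2 orth_antimono[OF x y \<open>x \<sqsubseteq> y\<close>]] b x y
  by (simp add: meet_greatest meet_leq1)

lemma interval_meet_orth:
  assumes x: "x \<in> L"
  shows "x \<sqinter> (b \<sqinter> x\<^sup>\<perp>) = \<zero>"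
proof -
  have "x \<sqinter> (b \<sqinter> x\<^sup>\<perp>) = b \<sqinter> (x \<sqinter> x\<^sup>\<perp>)"
    using b x by (metis meet_assoc meet_comm orth_closed)
  then show ?thesis
    using b x zero_least[OF b] by (simp add: meet_orth_self meet_eq_right)
qed

lemma interval_join_orth: "x \<in> L \<Longrightarrow> x \<sqsubseteq> b \<Longrightarrow> x \<squnion> b \<sqinter> x\<^sup>\<perp> = b"
  using orthomodular b by (simp add: meet_comm)

lemma interval_orthomodular:
  assumes x: "x \<in> L" and y: "y \<in> L" and "x \<sqsubseteq> y" "y \<sqsubseteq> b"
  shows "x \<squnion> (b \<sqinter> x\<^sup>\<perp>) \<sqinter> y = y"
proof -
  have "(b \<sqinter> x\<^sup>\<perp>) \<sqinter> y = x\<^sup>\<perp> \<sqinter> (b \<sqinter> y)"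
    using b x y by (simp add: meet_comm[of b "x\<^sup>\<perp>"] meet_assoc)
  also have "b \<sqinter> y = y"
    using meet_eq_right[OF y b \<open>y \<sqsubseteq> b\<close>] .
  finally show ?thesis
    using orthomodular[OF x y \<open>x \<sqsubseteq> y\<close>] by simp
qed

lemma leq_interval: "leq (interval M b) = leq M"
  by (simp add: leq_def interval_def fun_eq_iff)

lemma interval_is_OML: "is_OML (interval M b)"
proof -
  have meet_in: "x \<sqinter> y \<sqsubseteq> b" if "x \<in> L" "y \<in> L" "x \<sqsubseteq> b" for x y
    using leq_trans[OF _ _ b meet_leq1 \<open>x \<sqsubseteq> b\<close>] that by simp
  have join_in: "x \<squnion> y \<sqsubseteq> b" if "x \<in> L" "y \<in> L" "x \<sqsubseteq> b" "y \<sqsubseteq> b" for x y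
    using join_least that b by simp
  show ?thesis
    unfolding is_OML_def leq_interval
    using b by (auto simp: interval_def meet_in join_in meet_leq1 zero_least leq_refl
        meet_absorb join_absorb interval_orth_orth interval_orth_antimono
        interval_meet_orth interval_join_orth interval_orthomodular
        intro: meet_comm join_comm meet_assoc join_assoc)
qed

end

context
  fixes a
  assumes a: "a \<in> L"
begin

lemma mem_centralizer_iff: "x \<in> centralizer M a \<longleftrightarrow> x \<in> L \<and> x = x \<sqinter> a \<squnion> x \<sqinter> a\<^sup>\<perp>"
  using a by (auto simp: centralizer_def commutes_iff_decomposition)

lemma join_orthogonal_mem_centralizer:
  "u \<in> L \<Longrightarrow> u \<sqsubseteq> a \<Longrightarrow> v \<in> L \<Longrightarrow> v \<sqsubseteq> a\<^sup>\<perp> \<Longrightarrow> u \<squnion> v \<in> centralizer M a"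
  using commutes_join_orthogonal[OF a] by (simp add: centralizer_def)

lemma centralizer_join_decomposition:
  assumes "x \<in> centralizer M a" "y \<in> centralizer M a"
  shows "x \<squnion> y = (x \<sqinter> a \<squnion> y \<sqinter> a) \<squnion> (x \<sqinter> a\<^sup>\<perp> \<squnion> y \<sqinter> a\<^sup>\<perp>)"
  using assms a join_join_swap[of "x \<sqinter> a" "x \<sqinter> a\<^sup>\<perp>" "y \<sqinter> a" "y \<sqinter> a\<^sup>\<perp>"]
  by (simp add: mem_centralizer_iff)

lemma centralizer_orth_meet:
  assumes x: "x \<in> centralizer M a"
  shows "x\<^sup>\<perp> \<sqinter> a = a \<sqinter> (x \<sqinter> a)\<^sup>\<perp>" and "x\<^sup>\<perp> \<sqinter> a\<^sup>\<perp> = a\<^sup>\<perp> \<sqinter> (x \<sqinter> a\<^sup>\<perp>)\<^sup>\<perp>"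
proof -
  have "x \<in> L" and "x \<sqinter> a \<squnion> x \<sqinter> a\<^sup>\<perp> = x"
    using x by (simp_all add: mem_centralizer_iff)
  then show "x\<^sup>\<perp> \<sqinter> a = a \<sqinter> (x \<sqinter> a)\<^sup>\<perp>" and "x\<^sup>\<perp> \<sqinter> a\<^sup>\<perp> = a\<^sup>\<perp> \<sqinter> (x \<sqinter> a\<^sup>\<perp>)\<^sup>\<perp>"
    using orth_join_orthogonal_meet[OF a, of "x \<sqinter> a" "x \<sqinter> a\<^sup>\<perp>"]
      orth_join_orthogonal_meet_orth[OF a, of "x \<sqinter> a" "x \<sqinter> a\<^sup>\<perp>"] a
    by (simp_all add: meet_leq2)
qed

end

end

locale qma =
  fixes M :: "'a qstr"
  assumes QMA: "is_QMA M"

sublocale qma \<subseteq> oml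
  using QMA by unfold_locales (simp add: is_QMA_def)

context qma
begin

abbreviation E where "E \<equiv> ex M"

lemma
  ex_closed [simp]: "p \<in> L \<Longrightarrow> E p \<in> L" and
  ex_zero: "E \<zero> = \<zero>" and
  leq_ex: "p \<in> L \<Longrightarrow> p \<sqsubseteq> E p" and
  ex_join: "p \<in> L \<Longrightarrow> q \<in> L \<Longrightarrow> E (p \<squnion> q) = E p \<squnion> E q" and
  ex_ex: "p \<in> L \<Longrightarrow> E (E p) = E p" and
  ex_orth_ex: "p \<in> L \<Longrightarrow> E ((E p)\<^sup>\<perp>) = (E p)\<^sup>\<perp>"
  using QMA unfolding is_QMA_def by auto

lemma ex_mono:
  assumes "x \<in> L" "y \<in> L" "x \<sqsubseteq> y"
  shows "E x \<sqsubseteq> E y"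
proof -
  have "E x \<squnion> E y = E (x \<squnion> y)"
    using assms by (simp add: ex_join)
  also have "x \<squnion> y = y"
    using assms by (simp add: leq_iff_join)
  finally show ?thesis
    using assms by (simp add: leq_iff_join)
qed

lemma ex_leq_closed: "x \<in> L \<Longrightarrow> b \<in> L \<Longrightarrow> E b = b \<Longrightarrow> x \<sqsubseteq> b \<Longrightarrow> E x \<sqsubseteq> b"
  using ex_mono by fastforce

lemma ex_orth_closed: "b \<in> L \<Longrightarrow> E b = b \<Longrightarrow> E (b\<^sup>\<perp>) = b\<^sup>\<perp>"
  using ex_orth_ex[of b] by simp

lemma ex_meet_closed:
  assumes b: "b \<in> L" "E b = b" and d: "d \<in> L" "E d = d"
  shows "E (b \<sqinter> d) = b \<sqinter> d"
proof -
  have "E (b\<^sup>\<perp> \<squnion> d\<^sup>\<perp>) = b\<^sup>\<perp> \<squnion> d\<^sup>\<perp>"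
    using b d by (simp add: ex_join ex_orth_closed)
  then have "E ((b\<^sup>\<perp> \<squnion> d\<^sup>\<perp>)\<^sup>\<perp>) = (b\<^sup>\<perp> \<squnion> d\<^sup>\<perp>)\<^sup>\<perp>"
    using ex_orth_ex[of "b\<^sup>\<perp> \<squnion> d\<^sup>\<perp>"] b d by simp
  then show ?thesis
    using b d by (simp add: orth_join)
qed

lemma interval_is_QMA:
  assumes b: "b \<in> L" "E b = b"
  shows "is_QMA (interval M b)"
  unfolding is_QMA_def leq_interval[OF b(1)]
  using b interval_is_OML[OF b(1)]
  by (auto simp: interval_def ex_zero leq_ex ex_join ex_ex ex_leq_closed ex_meet_closed ex_orth_ex)

lemma subalgebra_is_QMA:
  assumes "is_subalgebra M C"
  shows "is_QMA (substr M C)"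
proof -
  have "leq (substr M C) = leq M"
    by (simp add: leq_def substr_def fun_eq_iff)
  then show ?thesis
    using assms unfolding is_QMA_def is_OML_def is_subalgebra_def
    by (auto simp: substr_def subset_iff zero_least one_greatest orth_antimono meet_orth_self
        join_orth_self orthomodular meet_absorb join_absorb ex_zero leq_ex ex_join ex_ex ex_orth_ex
        intro: meet_comm join_comm meet_assoc join_assoc)
qed

context
  fixes a
  assumes a: "a \<in> L" and closed: "E a = a"
begin

lemma centralizer_ex_decomposition:
  assumes x: "x \<in> centralizer M a"
  shows "E x = E (x \<sqinter> a) \<squnion> E (x \<sqinter> a\<^sup>\<perp>)"
    and "E (x \<sqinter> a) \<sqsubseteq> a" and "E (x \<sqinter> a\<^sup>\<perp>) \<sqsubseteq> a\<^sup>\<perp>"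
proof -
  have "x \<in> L" and "x \<sqinter> a \<squnion> x \<sqinter> a\<^sup>\<perp> = x"
    using x a by (simp_all add: mem_centralizer_iff)
  then show "E x = E (x \<sqinter> a) \<squnion> E (x \<sqinter> a\<^sup>\<perp>)"
    using ex_join[of "x \<sqinter> a" "x \<sqinter> a\<^sup>\<perp>"] a by simp
  show "E (x \<sqinter> a) \<sqsubseteq> a" and "E (x \<sqinter> a\<^sup>\<perp>) \<sqsubseteq> a\<^sup>\<perp>"
    using \<open>x \<in> L\<close> a closed by (simp_all add: ex_leq_closed ex_orth_closed meet_leq2)
qed

lemma centralizer_is_subalgebra: "is_subalgebra M (centralizer M a)"
proof -
  let ?C = "centralizer M a"
  have C_L: "x \<in> L" if "x \<in> ?C" for x
    using that a by (simp add: mem_centralizer_iff)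
  have join_C: "x \<squnion> y \<in> ?C" if "x \<in> ?C" "y \<in> ?C" for x y
    using centralizer_join_decomposition[OF a that] C_L[OF that(1)] C_L[OF that(2)] a
    by (simp add: join_orthogonal_mem_centralizer join_least meet_leq2)
  have orth_C: "x\<^sup>\<perp> \<in> ?C" if "x \<in> ?C" for x
    using that a C_L[OF that] by (simp add: centralizer_def commutes_iff join_comm)
  have meet_C: "x \<sqinter> y \<in> ?C" if "x \<in> ?C" "y \<in> ?C" for x y
    using orth_C[OF join_C[OF orth_C[OF that(1)] orth_C[OF that(2)]]] C_L that
    by (simp add: orth_join)
  have "\<zero> \<squnion> \<zero> \<in> ?C" and "a \<squnion> a\<^sup>\<perp> \<in> ?C"
    using a by (simp_all add: join_orthogonal_mem_centralizer zero_least leq_refl)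
  moreover have "E x \<in> ?C" if "x \<in> ?C" for x
    using centralizer_ex_decomposition[OF that] C_L[OF that] a
    by (simp add: join_orthogonal_mem_centralizer)
  ultimately show ?thesis
    unfolding is_subalgebra_def
    using join_C meet_C orth_C C_L by (auto simp: join_idem join_orth_self a)
qed

lemma centralizer_iso_interval_prod:
  "qma_iso (substr M (centralizer M a)) (qprod (interval M a) (interval M a\<^sup>\<perp>))
     (\<lambda>x. (x \<sqinter> a, x \<sqinter> a\<^sup>\<perp>))"
proof -
  let ?C = "centralizer M a" and ?f = "\<lambda>x. (x \<sqinter> a, x \<sqinter> a\<^sup>\<perp>)"
  have C_L: "x \<in> L" and dec: "x \<sqinter> a \<squnion> x \<sqinter> a\<^sup>\<perp> = x" if "x \<in> ?C" for x
    using that a by (simp_all add: mem_centralizer_iff)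
  have bij: "bij_betw ?f ?C ({u \<in> L. u \<sqsubseteq> a} \<times> {v \<in> L. v \<sqsubseteq> a\<^sup>\<perp>})"
    by (rule bij_betw_byWitness[where f' = "\<lambda>(u, v). u \<squnion> v"])
      (use a C_L dec in \<open>auto simp: meet_leq2 join_orthogonal_meet join_orthogonal_meet_orth
         join_orthogonal_mem_centralizer\<close>)
  have join: "?f (x \<squnion> y) = (x \<sqinter> a \<squnion> y \<sqinter> a, x \<sqinter> a\<^sup>\<perp> \<squnion> y \<sqinter> a\<^sup>\<perp>)"
    if "x \<in> ?C" "y \<in> ?C" for x y
    using centralizer_join_decomposition[OF a that] C_L[OF that(1)] C_L[OF that(2)] a
    by (simp add: join_orthogonal_meet join_orthogonal_meet_orth join_least meet_leq2)
  have ex: "?f (E x) = (E (x \<sqinter> a), E (x \<sqinter> a\<^sup>\<perp>))" if "x \<in> ?C" for x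
    using centralizer_ex_decomposition[OF that] C_L[OF that] a
    by (simp add: join_orthogonal_meet join_orthogonal_meet_orth)
  show ?thesis
    unfolding qma_iso_def
    using bij join ex centralizer_orth_meet[OF a] C_L a
    by (auto simp: substr_def qprod_def interval_def meet_meet_distrib meet_leq2 leq_refl
        zero_least one_greatest meet_eq_left meet_eq_right)
qed

end

end

theorem mainTheorem5:
  fixes M :: "'a qstr" and a :: 'a
  assumes "is_QMA M" and "a \<in> car M" and "ex M a = a"
  shows "is_QMA (interval M a)
     \<and> is_subalgebra M (centralizer M a)
     \<and> is_QMA (substr M (centralizer M a))
     \<and> qma_iso (substr M (centralizer M a))
               (qprod (interval M a) (interval M (orth M a)))
               (\<lambda>x. (meet M x a, meet M x (orth M a)))"
proof -
  interpret qma M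
    by unfold_locales (fact assms(1))
  have "is_subalgebra M (centralizer M a)"
    using centralizer_is_subalgebra assms(2,3) .
  then show ?thesis
    using interval_is_QMA centralizer_iso_interval_prod subalgebra_is_QMA assms(2,3) by blast
qed

end
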